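(* Let $\mathbb{X}\subseteq\mathbb{P}^2$ be a $\Bbbk$-configuration of type $(1,2,\dots,s)$ with $s\ge2$, defined by subsets $\mathbb{X}_1,\dots,\mathbb{X}_s$ and lines $\mathbb{L}_1,\dots,\mathbb{L}_s$, with $\mathbb{X}_1=\{P\}$ and $\mathbb{X}_2=\{Q_1,Q_2\}$. If $\mathbb{L}$ is a line with $|\mathbb{L}\cap\mathbb{X}|=s$ and $\mathbb{L}\notin\{\mathbb{L}_1,\dots,\mathbb{L}_s\}$, then $\mathbb{L}$ is either the line through $P$ and $Q_1$ or the line through $P$ and $Q_2$.
   Context: $\Bbbk$ is an algebraically closed field. A $\Bbbk$-configuration of type $(d_1,\dots,d_s)$ is a finite set $\mathbb{X}\subseteq\mathbb{P}^2$ for which there exist integers $1\le d_1<\cdots<d_s$, subsets $\mathbb{X}_1,\dots,\mathbb{X}_s$ of $\mathbb{X}$ and distinct lines $\mathbb{L}_1,\dots,\mathbb{L}_s\subseteq\mathbb{P}^2$ such that (1) $\mathbb{X}=\bigcup_{i=1}^s\mathbb{X}_i$; (2) $|\mathbb{X}_i|=d_i$ and $\mathbb{X}_i\subseteq\mathbb{L}_i$ for each $i$; (3) for $1<i\le s$, $\mathbb{L}_i$ contains no point of $\mathbb{X}_j$ for any $j<i$. We say $\mathbb{X}$ is defined by these subsets and lines. *)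

theory Defs
  imports "HOL-Computational_Algebra.Polynomial"
begin

type_synonym 'k vec3 = "'k \<times> 'k \<times> 'k"

(* A point of P^2(k): the set of nonzero scalar multiples of a nonzero vector in k^3 *)
definition proj_class :: "'k::field vec3 \<Rightarrow> 'k vec3 set" where
  "proj_class v = {(c * fst v, c * fst (snd v), c * snd (snd v)) | c. c \<noteq> 0}"

definition proj_points :: "'k::field vec3 set set" where
  "proj_points = {proj_class v | v. v \<noteq> (0, 0, 0)}"

definition line_of :: "'k::field vec3 \<Rightarrow> 'k vec3 set set" where
  "line_of a = {P \<in> proj_points. \<forall>v\<in>P.
      fst a * fst v + fst (snd a) * fst (snd v) + snd (snd a) * snd (snd v) = 0}"

definition is_line :: "'k::field vec3 set set \<Rightarrow> bool" where
  "is_line L \<longleftrightarrow> (\<exists>a. a \<noteq> (0, 0, 0) \<and> L = line_of a)"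

definition line_through :: "'k::field vec3 set \<Rightarrow> 'k vec3 set \<Rightarrow> 'k vec3 set set" where
  "line_through P Q = (THE L. is_line L \<and> P \<in> L \<and> Q \<in> L)"

definition kconfig_defined_by ::
  "'k::field vec3 set set \<Rightarrow> nat \<Rightarrow> (nat \<Rightarrow> nat) \<Rightarrow> (nat \<Rightarrow> 'k vec3 set set)
     \<Rightarrow> (nat \<Rightarrow> 'k vec3 set set) \<Rightarrow> bool" where
  "kconfig_defined_by X s d Xs Ls \<longleftrightarrow>
     X \<subseteq> proj_points \<and> finite X \<and>
     1 \<le> d 1 \<and> (\<forall>i\<in>{1..s}. \<forall>j\<in>{1..s}. i < j \<longrightarrow> d i < d j) \<and>
     X = (\<Union>i\<in>{1..s}. Xs i) \<and>
     (\<forall>i\<in>{1..s}. is_line (Ls i) \<and> card (Xs i) = d i \<and> Xs i \<subseteq> Ls i) \<and>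
     inj_on Ls {1..s} \<and>
     (\<forall>i\<in>{1..s}. \<forall>j\<in>{1..s}. j < i \<longrightarrow> Ls i \<inter> Xs j = {})"

end

theory Submission
  imports Defs
begin

text \<open>A line \<open>L\<close> that is none of the \<open>Ls i\<close> meets each \<open>Ls i\<close>, and hence each \<open>Xs i\<close>, in at
  most one point, because two distinct lines share at most one point. As \<open>X\<close> is the union of the
  \<open>s\<close> sets \<open>Xs i\<close>, the hypothesis \<open>card (L \<inter> X) = s\<close> forces \<open>L\<close> to meet every \<open>Xs i\<close>. So \<open>L\<close>
  passes through \<open>P\<close> and through \<open>Q1\<close> or \<open>Q2\<close>; both differ from \<open>P\<close> since \<open>Ls 2\<close> avoids
  \<open>Xs 1\<close>, and a line is determined by two of its points.\<close>

definition dot3 :: "'k::field vec3 \<Rightarrow> 'k vec3 \<Rightarrow> 'k" where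
  "dot3 a v = fst a * fst v + fst (snd a) * fst (snd v) + snd (snd a) * snd (snd v)"

definition cross3 :: "'k::field vec3 \<Rightarrow> 'k vec3 \<Rightarrow> 'k vec3" where
  "cross3 v w = (fst (snd v) * snd (snd w) - snd (snd v) * fst (snd w),
                 snd (snd v) * fst w - fst v * snd (snd w),
                 fst v * fst (snd w) - fst (snd v) * fst w)"

definition scale3 :: "'k::field \<Rightarrow> 'k vec3 \<Rightarrow> 'k vec3" where
  "scale3 c v = (c * fst v, c * fst (snd v), c * snd (snd v))"

lemma cross3_commute_zero:
  "cross3 v w = (0, 0, 0) \<longleftrightarrow> cross3 w v = (0, 0, 0)"
  by (cases v; cases w) (auto simp: cross3_def algebra_simps)

lemma cross3_eq_zero_imp_scale3:
  fixes a c :: "'k::field vec3"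
  assumes "c \<noteq> (0, 0, 0)" "cross3 a c = (0, 0, 0)"
  shows "\<exists>t. a = scale3 t c"
proof -
  obtain a1 a2 a3 where a: "a = (a1, a2, a3)" by (cases a) auto
  obtain c1 c2 c3 where c: "c = (c1, c2, c3)" by (cases c) auto
  have e: "a2 * c3 = a3 * c2" "a3 * c1 = a1 * c3" "a1 * c2 = a2 * c1"
    using assms(2) by (auto simp: a c cross3_def)
  consider "c1 \<noteq> 0" | "c1 = 0" "c2 \<noteq> 0" | "c1 = 0" "c2 = 0" "c3 \<noteq> 0"
    using assms(1) c by auto
  then show ?thesis
  proof cases
    case 1
    then have "a = scale3 (a1 / c1) c" using e by (auto simp: a c scale3_def field_simps)
    then show ?thesis by blast
  next
    case 2
    then have "a = scale3 (a2 / c2) c" using e by (auto simp: a c scale3_def field_simps)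
    then show ?thesis by blast
  next
    case 3
    then have "a = scale3 (a3 / c3) c" using e by (auto simp: a c scale3_def field_simps)
    then show ?thesis by blast
  qed
qed

lemma cross3_cross3:
  "cross3 a (cross3 v w) = (fst v * dot3 a w - fst w * dot3 a v,
     fst (snd v) * dot3 a w - fst (snd w) * dot3 a v,
     snd (snd v) * dot3 a w - snd (snd w) * dot3 a v)"
  by (cases a; cases v; cases w) (simp add: cross3_def dot3_def algebra_simps)

lemma dot3_scale3: "dot3 (scale3 t c) u = t * dot3 c u"
  by (simp add: dot3_def scale3_def algebra_simps)

lemma orthogonal_to_two_imp_scale3_cross3:
  assumes "dot3 a v = 0" "dot3 a w = 0" "cross3 v w \<noteq> (0, 0, 0)"
  shows "\<exists>t. a = scale3 t (cross3 v w)"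
  using assms by (intro cross3_eq_zero_imp_scale3) (simp_all add: cross3_cross3)

lemma proj_class_self: "v \<in> proj_class v"
  unfolding proj_class_def by (cases v) (auto intro: exI[of _ 1])

lemma proj_class_scale3:
  assumes "t \<noteq> 0"
  shows "proj_class (scale3 t v) = proj_class v"
proof (intro equalityI subsetI)
  fix x assume "x \<in> proj_class (scale3 t v)"
  then obtain c where "c \<noteq> 0" "x = (c * (t * fst v), c * (t * fst (snd v)), c * (t * snd (snd v)))"
    unfolding proj_class_def scale3_def by auto
  then show "x \<in> proj_class v"
    unfolding proj_class_def using assms by (auto intro!: exI[of _ "c * t"] simp: mult.assoc)
next
  fix x assume "x \<in> proj_class v"
  then obtain c where "c \<noteq> 0" "x = (c * fst v, c * fst (snd v), c * snd (snd v))"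
    unfolding proj_class_def by auto
  then show "x \<in> proj_class (scale3 t v)"
    unfolding proj_class_def scale3_def using assms by (auto intro!: exI[of _ "c / t"])
qed

lemma distinct_proj_class_cross3_nonzero:
  assumes "v \<noteq> (0, 0, 0)" "w \<noteq> (0, 0, 0)" "proj_class v \<noteq> proj_class w"
  shows "cross3 v w \<noteq> (0, 0, 0)"
proof
  assume "cross3 v w = (0, 0, 0)"
  then obtain t where t: "w = scale3 t v"
    using cross3_eq_zero_imp_scale3 assms(1) cross3_commute_zero by blast
  with assms(2) have "t \<noteq> 0" by (auto simp: scale3_def)
  with t assms(3) proj_class_scale3 show False by metis
qed

lemma dot3_eq_0_if_in_line_of: "P \<in> line_of a \<Longrightarrow> v \<in> P \<Longrightarrow> dot3 a v = 0"
  unfolding line_of_def dot3_def by auto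

lemma line_of_point_eq_proj_class:
  assumes "P \<in> line_of a"
  obtains v where "v \<noteq> (0, 0, 0)" "P = proj_class v"
  using assms unfolding line_of_def proj_points_def by auto

lemma line_of_scale3:
  assumes "t \<noteq> 0"
  shows "line_of (scale3 t c) = line_of c"
  using assms unfolding line_of_def dot3_def[symmetric] by (simp add: dot3_scale3)

text \<open>Two points \<open>[v] \<noteq> [w]\<close> pin the equation of a line through them down to a multiple of
  \<open>v \<times> w\<close>.\<close>

lemma lines_eq_if_two_common_points:
  fixes L1 L2 :: "'k::field vec3 set set"
  assumes "is_line L1" "is_line L2" "P \<in> L1" "P \<in> L2" "Q \<in> L1" "Q \<in> L2" "P \<noteq> Q"
  shows "L1 = L2"
proof -
  obtain a where a: "a \<noteq> (0, 0, 0)" "L1 = line_of a" using assms(1) unfolding is_line_def by auto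
  obtain b where b: "b \<noteq> (0, 0, 0)" "L2 = line_of b" using assms(2) unfolding is_line_def by auto
  obtain v where v: "v \<noteq> (0, 0, 0)" "P = proj_class v"
    using assms(3) a(2) line_of_point_eq_proj_class by metis
  obtain w where w: "w \<noteq> (0, 0, 0)" "Q = proj_class w"
    using assms(5) a(2) line_of_point_eq_proj_class by metis
  have "dot3 a v = 0" "dot3 a w = 0" "dot3 b v = 0" "dot3 b w = 0"
    using assms a b v w proj_class_self dot3_eq_0_if_in_line_of by metis+
  moreover have "cross3 v w \<noteq> (0, 0, 0)"
    using distinct_proj_class_cross3_nonzero v w assms(7) by blast
  ultimately obtain t t' where t: "a = scale3 t (cross3 v w)" and t': "b = scale3 t' (cross3 v w)"
    using orthogonal_to_two_imp_scale3_cross3 by metis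
  have "t \<noteq> 0" "t' \<noteq> 0" using a(1) b(1) t t' by (auto simp: scale3_def)
  then show ?thesis using a(2) b(2) t t' line_of_scale3 by metis
qed

lemma line_through_eq:
  assumes "is_line L" "P \<in> L" "Q \<in> L" "P \<noteq> Q"
  shows "L = line_through P Q"
  unfolding line_through_def
  by (rule the_equality[symmetric]) (use assms lines_eq_if_two_common_points in blast)+

lemma card_inter_other_line_le_1:
  fixes L M :: "'k::field vec3 set set"
  assumes "is_line L" "is_line M" "L \<noteq> M" "A \<subseteq> M"
  shows "card (L \<inter> A) \<le> 1"
proof (cases "finite (L \<inter> A)")
  case True
  show ?thesis unfolding One_nat_def
    by (rule card_le_Suc0_iff_eq[OF True, THEN iffD2])
      (use assms lines_eq_if_two_common_points in blast)
qed simp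

lemma sum_bounded_by_1_attains_card:
  fixes f :: "'a \<Rightarrow> nat"
  assumes "finite I" "\<forall>i\<in>I. f i \<le> 1" "card I \<le> sum f I" "i \<in> I"
  shows "f i = 1"
proof (rule ccontr)
  assume "f i \<noteq> 1"
  with assms(2,4) have "f i < 1" by fastforce
  with assms(2,4) have "sum f I < sum (\<lambda>_. 1) I"
    by (intro sum_strict_mono_ex1[OF assms(1)]) auto
  with assms(3) show False by simp
qed

lemma kconfig_line_meets_every_subset:
  assumes K: "kconfig_defined_by X s d Xs Ls"
    and "is_line L" "L \<notin> Ls ` {1..s}" "s \<le> card (L \<inter> X)" "i \<in> {1..s}"
  shows "L \<inter> Xs i \<noteq> {}"
proof -
  have le1: "\<forall>j\<in>{1..s}. card (L \<inter> Xs j) \<le> 1"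
  proof
    fix j assume "j \<in> {1..s}"
    then have "is_line (Ls j)" "Xs j \<subseteq> Ls j" "L \<noteq> Ls j"
      using K assms(3) unfolding kconfig_defined_by_def by auto
    then show "card (L \<inter> Xs j) \<le> 1" using card_inter_other_line_le_1 assms(2) by blast
  qed
  have "L \<inter> X = (\<Union>j\<in>{1..s}. L \<inter> Xs j)" using K unfolding kconfig_defined_by_def by auto
  then have "card (L \<inter> X) \<le> (\<Sum>j\<in>{1..s}. card (L \<inter> Xs j))"
    using card_UN_le[of "{1..s}" "\<lambda>j. L \<inter> Xs j"] by simp
  with assms(4) have "card (L \<inter> Xs i) = 1"
    using sum_bounded_by_1_attains_card[OF _ le1 _ assms(5)] by simp
  then show ?thesis by force
qed

theorem lemma2p7:
  fixes X L :: "'k::alg_closed_field vec3 set set"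
    and Xs Ls :: "nat \<Rightarrow> 'k vec3 set set"
    and P Q1 Q2 :: "'k vec3 set"
    and s :: nat
  assumes "s \<ge> 2"
    and "kconfig_defined_by X s (\<lambda>i. i) Xs Ls"
    and "Xs 1 = {P}" and "Xs 2 = {Q1, Q2}"
    and "is_line L" and "card (L \<inter> X) = s"
    and "L \<notin> Ls ` {1..s}"
  shows "L = line_through P Q1 \<or> L = line_through P Q2"
proof -
  have one: "1 \<in> {1..s}" and two: "2 \<in> {1..s}" using assms(1) by auto
  have "L \<inter> Xs 1 \<noteq> {}" "L \<inter> Xs 2 \<noteq> {}"
    using kconfig_line_meets_every_subset[OF assms(2,5,7)] one two assms(6) by simp_all
  then have "P \<in> L" and Q: "Q1 \<in> L \<or> Q2 \<in> L" using assms(3,4) by auto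
  have "Xs 2 \<subseteq> Ls 2" "Ls 2 \<inter> Xs 1 = {}"
    using assms(2) one two unfolding kconfig_defined_by_def by auto
  then have "P \<noteq> Q1" "P \<noteq> Q2" using assms(3,4) by auto
  with Q show ?thesis using line_through_eq[OF assms(5) \<open>P \<in> L\<close>] by blast
qed

end
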